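(* Fix integers $N\ge 2$ and $K\ge 1$. For any Boolean tensor $\mathcal{B}\in\{0,1\}^{N\times N\times K}$ with frontal slices $\mathbf{B}_1,\dots,\mathbf{B}_K$, and any $r\in\mathbb{N}^+$ with \[ r\ge\min\Big\{N,\;2\sum_{k=1}^K\mathrm{rrank}(\mathbf{B}_k)\Big\},\] the set $\pi(\mathcal{M}^{\text{RESCAL}}_r)$ contains a ranking tensor consistent with $\mathcal{B}$.
   Context: A score-based model assigns a score $s_k(i,j)\in\mathbb{R}$ to each triple, $i,j\in\{1,\dots,N\}$, $k\in\{1,\dots,K\}$; its scoring tensor has frontal slices $\mathbf{S}_k$ with $[\mathbf{S}_k]_{ij}=s_k(i,j)$. For a real $N\times N$ matrix $\mathbf{S}$, $\pi(\mathbf{S})$ is the matrix of dense ranks: $\pi_{ij}(\mathbf{S})=1+$ (number of distinct values among entries of $\mathbf{S}$ strictly larger than $s_{ij}$). For tensors, $\pi$ acts slicewise; for a set $X$, $\pi(X)=\{\pi(x):x\in X\}$. RESCAL of size $r$: parameters $\mathbf{A}\in\mathbb{R}^{N\times r}$ (rows $\mathbf{a}_i$), $\mathbf{R}_1,\dots,\mathbf{R}_K\in\mathbb{R}^{r\times r}$, score $\mathbf{a}_i^T\mathbf{R}_k\mathbf{a}_j$; $\mathcal{M}^{\text{RESCAL}}_r$ is the set of scoring tensors of such models. A ranking tensor $\mathcal{P}$ is consistent with $\mathcal{B}$ if for every $k$ and all $i,j,i',j'$: $b_{ijk}=1$ and $b_{i'j'k}=0$ imply $p_{ijk}<p_{i'j'k}$.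 Rounding rank: for a real matrix, $\mathrm{round}$ maps each entry $x$ to $1$ if $x\ge 1/2$ and to $0$ otherwise; for a Boolean matrix $\mathbf{B}\in\{0,1\}^{m\times n}$, $\mathrm{rrank}(\mathbf{B})=\min\{\mathrm{rank}(\mathbf{A}):\mathbf{A}\in\mathbb{R}^{m\times n},\ \mathrm{round}(\mathbf{A})=\mathbf{B}\}$. *)

theory Defs
  imports "Jordan_Normal_Form.DL_Rank"
begin

(* Indices are 0-based: entities i,j \<in> {0..<N}, relations k \<in> {0..<K}.
   Tensors are functions k \<Rightarrow> i \<Rightarrow> j \<Rightarrow> value (frontal slice k first). *)

definition dense_rank :: "nat \<Rightarrow> (nat \<Rightarrow> nat \<Rightarrow> real) \<Rightarrow> nat \<Rightarrow> nat \<Rightarrow> nat" where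
  "dense_rank N S i j = 1 + card {v. (\<exists>i'<N. \<exists>j'<N. v = S i' j') \<and> v > S i j}"

definition pi_tensor :: "nat \<Rightarrow> (nat \<Rightarrow> nat \<Rightarrow> nat \<Rightarrow> real) \<Rightarrow> (nat \<Rightarrow> nat \<Rightarrow> nat \<Rightarrow> nat)" where
  "pi_tensor N S = (\<lambda>k i j. if i < N \<and> j < N then dense_rank N (S k) i j else 0)"

definition rescal_tensors :: "nat \<Rightarrow> nat \<Rightarrow> nat \<Rightarrow> (nat \<Rightarrow> nat \<Rightarrow> nat \<Rightarrow> real) set" where
  "rescal_tensors N K r = {S. \<exists>(A :: nat \<Rightarrow> nat \<Rightarrow> real) (R :: nat \<Rightarrow> nat \<Rightarrow> nat \<Rightarrow> real).
      \<forall>k<K. \<forall>i<N. \<forall>j<N. S k i j = (\<Sum>a<r. \<Sum>b<r. A i a * R k a b * A j b)}"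

definition consistent :: "nat \<Rightarrow> nat \<Rightarrow> (nat \<Rightarrow> nat \<Rightarrow> nat \<Rightarrow> nat) \<Rightarrow> (nat \<Rightarrow> nat \<Rightarrow> nat \<Rightarrow> bool) \<Rightarrow> bool" where
  "consistent N K P B \<longleftrightarrow> (\<forall>k<K. \<forall>i<N. \<forall>j<N. \<forall>i'<N. \<forall>j'<N.
      B k i j \<and> \<not> B k i' j' \<longrightarrow> P k i j < P k i' j')"

definition round_real :: "real \<Rightarrow> bool" where
  "round_real x \<longleftrightarrow> x \<ge> 1/2"

definition rrank :: "nat \<Rightarrow> nat \<Rightarrow> (nat \<Rightarrow> nat \<Rightarrow> bool) \<Rightarrow> nat" where
  "rrank m n B = (LEAST q. \<exists>M :: real mat. M \<in> carrier_mat m n \<and>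
      (\<forall>i<m. \<forall>j<n. round_real (M $$ (i,j)) = B i j) \<and> vec_space.rank m M = q)"

end

theory Submission imports Defs begin

(* A RESCAL model of size r >= N realizes every scoring tensor (A = identity, R_k = S_k).
   Otherwise write each slice B_k as the rounding of a matrix of rank q_k = rrank B_k, i.e. of a
   sum of q_k outer products u w^T.  An outer product placed on a single slice is a RESCAL model
   of size 2 (A = [u w], core with a single entry 1), and RESCAL models add by juxtaposing their
   latent coordinates under a block-diagonal core; so 2 (q_1 + ... + q_K) coordinates realize a
   tensor whose slices threshold at 1/2 to B.  Dense ranks reverse the order of scores, hence the
   ranking of that tensor is consistent with B. *)

lemma sum_lessThan_add:
  fixes f :: "nat \<Rightarrow> 'a::comm_monoid_add"
  shows "(\<Sum>a<m + n. f a) = (\<Sum>a<m. f a) + (\<Sum>a<n. f (m + a))"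
  by (induction n) (simp_all add: add.assoc)

lemma rescal_tensors_cong:
  assumes "S \<in> rescal_tensors N K r"
    and "\<And>k i j. k < K \<Longrightarrow> i < N \<Longrightarrow> j < N \<Longrightarrow> T k i j = S k i j"
  shows "T \<in> rescal_tensors N K r"
  using assms unfolding rescal_tensors_def by auto

lemma rescal_tensors_zero: "(\<lambda>k i j. 0) \<in> rescal_tensors N K r"
  unfolding rescal_tensors_def by (intro CollectI exI[of _ "\<lambda>i a. 0"]) simp

lemma rescal_tensors_add:
  assumes "S \<in> rescal_tensors N K r1" and "T \<in> rescal_tensors N K r2"
  shows "(\<lambda>k i j. S k i j + T k i j) \<in> rescal_tensors N K (r1 + r2)"
proof -
  obtain A1 R1 where S: "\<And>k i j. k < K \<Longrightarrow> i < N \<Longrightarrow> j < N \<Longrightarrow>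
      S k i j = (\<Sum>a<r1. \<Sum>b<r1. A1 i a * R1 k a b * A1 j b)"
    using assms(1) unfolding rescal_tensors_def by blast
  obtain A2 R2 where T: "\<And>k i j. k < K \<Longrightarrow> i < N \<Longrightarrow> j < N \<Longrightarrow>
      T k i j = (\<Sum>a<r2. \<Sum>b<r2. A2 i a * R2 k a b * A2 j b)"
    using assms(2) unfolding rescal_tensors_def by blast
  define A where "A i a = (if a < r1 then A1 i a else A2 i (a - r1))" for i a
  define R where "R k a b = (if a < r1 \<and> b < r1 then R1 k a b
      else if r1 \<le> a \<and> r1 \<le> b then R2 k (a - r1) (b - r1) else 0)" for k a b
  have "S k i j + T k i j = (\<Sum>a<r1 + r2. \<Sum>b<r1 + r2. A i a * R k a b * A j b)"
    if "k < K" "i < N" "j < N" for k i j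
    using that by (simp add: S T sum_lessThan_add sum.distrib A_def R_def)
  then show ?thesis unfolding rescal_tensors_def by blast
qed

lemma rescal_tensors_mono:
  assumes "S \<in> rescal_tensors N K r" and "r \<le> r'"
  shows "S \<in> rescal_tensors N K r'"
proof -
  have "(\<lambda>k i j. S k i j + 0) \<in> rescal_tensors N K (r + (r' - r))"
    using rescal_tensors_add[OF assms(1) rescal_tensors_zero] .
  then show ?thesis using assms(2) by simp
qed

lemma rescal_tensors_sum:
  assumes "finite X" and "\<And>x. x \<in> X \<Longrightarrow> S x \<in> rescal_tensors N K (q x)"
  shows "(\<lambda>k i j. \<Sum>x\<in>X. S x k i j) \<in> rescal_tensors N K (\<Sum>x\<in>X. q x)"
  using assms
proof (induction X rule: finite_induct)
  case empty
  show ?case using rescal_tensors_zero by simp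
next
  case (insert x X)
  then show ?case using rescal_tensors_add[of "S x" N K "q x"] by simp
qed

lemma rescal_tensors_slice_rank_one:
  "(\<lambda>k i j. if k = l then u i * w j else 0) \<in> rescal_tensors N K 2"
proof -
  define A :: "nat \<Rightarrow> nat \<Rightarrow> real" where "A i a = (if a = 0 then u i else w i)" for i a
  define R :: "nat \<Rightarrow> nat \<Rightarrow> nat \<Rightarrow> real"
    where "R k a b = (if k = l \<and> a = 0 \<and> b = 1 then 1 else 0)" for k a b
  have "(if k = l then u i * w j else 0) = (\<Sum>a<2. \<Sum>b<2. A i a * R k a b * A j b)" for k i j
    by (simp add: A_def R_def numeral_2_eq_2)
  then show ?thesis unfolding rescal_tensors_def by blast
qed

lemma rescal_tensors_full:
  assumes "N \<le> r"
  shows "S \<in> rescal_tensors N K r"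
proof -
  define A :: "nat \<Rightarrow> nat \<Rightarrow> real" where "A i a = (if a = i then 1 else 0)" for i a
  have "S k i j = (\<Sum>a<r. \<Sum>b<r. A i a * S k a b * A j b)" if "i < N" "j < N" for k i j
    using that assms
    by (simp add: A_def if_distrib[where f = "\<lambda>x. x * _"] if_distrib[where f = "\<lambda>x. _ * x"]
        cong: if_cong)
  then show ?thesis unfolding rescal_tensors_def by blast
qed

lemma rescal_tensors_slicewise_factorization:
  fixes U W :: "nat \<Rightarrow> nat \<Rightarrow> nat \<Rightarrow> real"
  assumes "2 * (\<Sum>k<K. q k) \<le> r"
  shows "(\<lambda>k i j. \<Sum>t<q k. U k i t * W k j t) \<in> rescal_tensors N K r"
proof -
  have slice: "(\<lambda>k i j. \<Sum>t<q l. if k = l then U l i t * W l j t else 0)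
      \<in> rescal_tensors N K (\<Sum>t<q l. 2)" for l
    by (rule rescal_tensors_sum) (simp_all add: rescal_tensors_slice_rank_one)
  have "(\<lambda>k i j. \<Sum>l<K. \<Sum>t<q l. if k = l then U l i t * W l j t else 0)
      \<in> rescal_tensors N K (\<Sum>l<K. \<Sum>t<q l. 2)"
    by (rule rescal_tensors_sum[OF finite_lessThan slice])
  then have "(\<lambda>k i j. \<Sum>l<K. \<Sum>t<q l. if k = l then U l i t * W l j t else 0)
      \<in> rescal_tensors N K r"
    by (rule rescal_tensors_mono) (use assms in \<open>simp add: sum_distrib_left mult.commute\<close>)
  moreover have "(\<Sum>t<q k. U k i t * W k j t)
      = (\<Sum>l<K. \<Sum>t<q l. if k = l then U l i t * W l j t else 0)" if "k < K" for k i j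
  proof -
    have "(\<Sum>l<K. \<Sum>t<q l. if k = l then U l i t * W l j t else 0)
        = (\<Sum>l<K. if k = l then \<Sum>t<q l. U l i t * W l j t else 0)"
      by (intro sum.cong) auto
    then show ?thesis using that by simp
  qed
  ultimately show ?thesis by (rule rescal_tensors_cong)
qed

lemma (in vec_space) col_in_span_maximal_indpt:
  assumes A: "A \<in> carrier_mat n nc"
    and max: "maximal S (\<lambda>T. T \<subseteq> set (cols A) \<and> lin_indpt T)"
    and "j < nc"
  shows "col A j \<in> span S"
proof -
  have S: "S \<subseteq> set (cols A)" "lin_indpt S" using max unfolding maximal_def by auto
  have cols: "set (cols A) \<subseteq> carrier_vec n" using cols_dim[of A] A by auto
  have c: "col A j \<in> set (cols A)"
    using A \<open>j < nc\<close> by (metis carrier_matD(2) cols_length cols_nth nth_mem)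
  show ?thesis
  proof (cases "col A j \<in> S")
    case True
    then show ?thesis using in_own_span S(1) cols by blast
  next
    case False
    have "lin_dep (insert (col A j) S)"
      using max c S False unfolding maximal_def by blast
    then show ?thesis using lin_dep_iff_in_span[OF _ S(2) _ False] S(1) cols c by auto
  qed
qed

lemma (in vec_space) rank_factorization:
  assumes A: "A \<in> carrier_mat n nc"
  shows "\<exists>U W. \<forall>i<n. \<forall>j<nc. A $$ (i,j) = (\<Sum>t<rank A. U i t * W j t)"
proof -
  obtain S where max: "maximal S (\<lambda>T. T \<subseteq> set (cols A) \<and> lin_indpt T)"
    using maximal_exists[of "\<lambda>T. T \<subseteq> set (cols A) \<and> lin_indpt T" "card (set (cols A))" "{}"]
    by (meson List.finite_set card_mono empty_iff empty_subsetI finite_lin_indpt2 rev_finite_subset)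
  have S: "finite S" "S \<subseteq> carrier_vec n"
    using max cols_dim[of A] A finite_subset unfolding maximal_def by auto
  have "\<forall>j. \<exists>a. j < nc \<longrightarrow> lincomb a S = col A j"
    using finite_in_span[OF S] col_in_span_maximal_indpt[OF A max] by metis
  then obtain a where a: "\<And>j. j < nc \<Longrightarrow> lincomb (a j) S = col A j" by metis
  obtain h where h: "bij_betw h {..<card S} S"
    using ex_bij_betw_nat_finite[OF S(1)] by (auto simp: lessThan_atLeast0)
  have "A $$ (i,j) = (\<Sum>t<rank A. h t $ i * a j (h t))" if "i < n" "j < nc" for i j
  proof -
    have "A $$ (i,j) = lincomb (a j) S $ i" using A a that by simp
    also have "\<dots> = (\<Sum>x\<in>S. a j x * x $ i)" by (rule lincomb_index[OF that(1) S(2)])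
    also have "\<dots> = (\<Sum>t<card S. a j (h t) * h t $ i)"
      using sum.reindex_bij_betw[OF h, of "\<lambda>x. a j x * x $ i"] by simp
    finally show ?thesis using rank_card_indpt[OF A max] by (simp add: mult.commute)
  qed
  then show ?thesis by (intro exI[of _ "\<lambda>i t. h t $ i"] exI[of _ "\<lambda>j t. a j (h t)"]) simp
qed

lemma rrank_factorization:
  "\<exists>U W. \<forall>i<m. \<forall>j<n. B i j \<longleftrightarrow> 1/2 \<le> (\<Sum>t<rrank m n B. U i t * W j t :: real)"
proof -
  let ?rounds_to = "\<lambda>q. \<exists>M :: real mat. M \<in> carrier_mat m n \<and>
      (\<forall>i<m. \<forall>j<n. round_real (M $$ (i,j)) = B i j) \<and> vec_space.rank m M = q"
  define M0 :: "real mat" where "M0 = mat m n (\<lambda>(i,j). if B i j then 1 else 0)"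
  have "?rounds_to (vec_space.rank m M0)"
    unfolding round_real_def by (intro exI[of _ M0]) (auto simp: M0_def)
  then have "?rounds_to (rrank m n B)" unfolding rrank_def by (rule LeastI)
  then obtain M where M: "M \<in> carrier_mat m n" "\<forall>i<m. \<forall>j<n. round_real (M $$ (i,j)) = B i j"
    "vec_space.rank m M = rrank m n B" by blast
  obtain U W where "\<forall>i<m. \<forall>j<n. M $$ (i,j) = (\<Sum>t<rrank m n B. U i t * W j t)"
    using vec_space.rank_factorization[OF M(1)] M(3) by auto
  then have "\<forall>i<m. \<forall>j<n. B i j \<longleftrightarrow> 1/2 \<le> (\<Sum>t<rrank m n B. U i t * W j t)"
    using M(2) unfolding round_real_def by auto
  then show ?thesis by blast
qed

lemma dense_rank_strict_antimono:
  assumes "i' < N" "j' < N" and "S i j < S i' j'"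
  shows "dense_rank N S i' j' < dense_rank N S i j"
proof -
  let ?above = "\<lambda>s. {v. (\<exists>a<N. \<exists>b<N. v = S a b) \<and> v > s}"
  have "finite (?above s)" for s
    by (rule finite_subset[of _ "(\<lambda>(a,b). S a b) ` ({..<N} \<times> {..<N})"]) auto
  moreover have "?above (S i' j') \<subset> ?above (S i j)" using assms by auto
  ultimately show ?thesis unfolding dense_rank_def by (simp add: psubset_card_mono)
qed

lemma consistent_pi_tensor:
  assumes "\<And>k i j i' j'. k < K \<Longrightarrow> i < N \<Longrightarrow> j < N \<Longrightarrow> i' < N \<Longrightarrow> j' < N \<Longrightarrow>
      B k i j \<Longrightarrow> \<not> B k i' j' \<Longrightarrow> S k i' j' < S k i j"
  shows "consistent N K (pi_tensor N S) B"
  unfolding consistent_def pi_tensor_def using assms dense_rank_strict_antimono by simp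

theorem theorem11:
  fixes N K r :: nat and B :: "nat \<Rightarrow> nat \<Rightarrow> nat \<Rightarrow> bool"
  assumes "N \<ge> 2" and "K \<ge> 1" and "r \<ge> 1"
    and "r \<ge> min N (2 * (\<Sum>k<K. rrank N N (B k)))"
  shows "\<exists>P \<in> pi_tensor N ` rescal_tensors N K r. consistent N K P B"
proof -
  obtain S where S: "S \<in> rescal_tensors N K r"
    and threshold: "\<And>k i j. k < K \<Longrightarrow> i < N \<Longrightarrow> j < N \<Longrightarrow> B k i j \<longleftrightarrow> 1/2 \<le> S k i j"
  proof (cases "N \<le> r")
    case True
    show ?thesis
      by (rule that[OF rescal_tensors_full[OF True, where S = "\<lambda>k i j. of_bool (B k i j)"]]) simp
  next
    case False
    obtain U W where UW: "\<forall>k. \<forall>i<N. \<forall>j<N.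
        B k i j \<longleftrightarrow> 1/2 \<le> (\<Sum>t<rrank N N (B k). U k i t * W k j t :: real)"
      using rrank_factorization[of N N "B _"] by metis
    show ?thesis
      by (rule that[OF rescal_tensors_slicewise_factorization]) (use False assms(4) UW in auto)
  qed
  then have "consistent N K (pi_tensor N S) B" by (intro consistent_pi_tensor) force
  with S show ?thesis by blast
qed

end
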